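(* Let $I=(x_1,\ldots,x_n)$ be any list of items with sizes $x_j\in(1/3,1]$. Let $I'=(x'_1,\ldots,x'_n)$ be a list with sizes in $(0,1]$ such that $x'_i>x_i$ for a single index $i\in[n]$ and $x'_j=x_j$ for all $j\ne i$. Then $\mathrm{BF}(I)\le\mathrm{BF}(I')$.
   Context: The online algorithm Best Fit (BF) processes a list of items with sizes in $(0,1]$ in the given order and packs the current item into the fullest bin (largest current load, i.e. sum of sizes of items in it) into which it fits without exceeding total size $1$, opening a new unit-capacity bin if it fits into no existing bin; items are never moved. $\mathrm{BF}(I)$ denotes the number of bins Best Fit uses on list $I$. *)

theory Defs
  imports Complex_Main
begin

text \<open>A packing state is the list of current bin loads (in order of opening).
  Best Fit packs item x into a bin of largest load among those with load + x \<le> 1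
  (ties broken by lowest index, which does not affect the number of bins),
  and opens a new bin if no bin fits.\<close>

definition fits :: "real list \<Rightarrow> real \<Rightarrow> nat \<Rightarrow> bool" where
  "fits L x j \<longleftrightarrow> j < length L \<and> L ! j + x \<le> 1"

definition bf_step :: "real list \<Rightarrow> real \<Rightarrow> real list" where
  "bf_step L x =
     (if \<exists>j. fits L x j then
        (let j = (LEAST j. fits L x j \<and> (\<forall>k. fits L x k \<longrightarrow> L ! k \<le> L ! j))
         in L[j := L ! j + x])
      else L @ [x])"

definition bf_pack :: "real list \<Rightarrow> real list" where
  "bf_pack I = foldl bf_step [] I"

definition BF :: "real list \<Rightarrow> nat" where
  "BF I = length (bf_pack I)"

end

(*
  All items exceed 1/3, so every bin holds at most two items, and a bin of load above 2/3 can
  never receive another item. Run Best Fit on I and I' side by side. Right after the enlarged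
  item, and after every later step, the two multisets of bin loads stay coupled:
  apart from closed bins (loads above 2/3) of equal number, the runs share a family of open bins
  no two of which fit together, and either each run has one further open bin, the one of I'
  being at least as full, or I' has two further open bins that do not fit together where I has
  one closed bin more. Both shapes give I' at least as many bins as I.
*)

theory Submission
  imports Defs "HOL-Library.Multiset"
begin

definition no_two_fit :: "real multiset \<Rightarrow> bool" where
  "no_two_fit Z \<longleftrightarrow> (\<forall>e\<in>#Z. \<forall>f\<in>#Z - {#e#}. 1 < e + f)"

lemma no_two_fit_empty [simp]: "no_two_fit {#}"
  unfolding no_two_fit_def by simp

lemma no_two_fit_add_mset [simp]:
  "no_two_fit (add_mset z Z) \<longleftrightarrow> no_two_fit Z \<and> (\<forall>w\<in>#Z. 1 < z + w)"
  unfolding no_two_fit_def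
  by (auto simp: add.commute insert_DiffM2 dest: in_diffD)

text \<open>Best Fit on the multiset of bin loads; the bin count does not depend on bin order or on
  how ties are broken.\<close>

inductive bf_move :: "real multiset \<Rightarrow> real \<Rightarrow> real multiset \<Rightarrow> bool" where
  into_bin: "\<lbrakk>e \<in># M; e + y \<le> 1; \<forall>f\<in>#M. f + y \<le> 1 \<longrightarrow> f \<le> e\<rbrakk>
    \<Longrightarrow> bf_move M y (add_mset (e + y) (M - {#e#}))"
| new_bin: "\<forall>f\<in>#M. 1 < f + y \<Longrightarrow> bf_move M y (add_mset y M)"

lemma bf_move_no_fit: "bf_move M y N \<Longrightarrow> \<forall>f\<in>#M. 1 < f + y \<Longrightarrow> N = add_mset y M"
  by (erule bf_move.cases) force+

lemma bf_move_fitE: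
  assumes "bf_move M y N" and "f \<in># M" and "f + y \<le> 1"
  obtains e where "e \<in># M" "e + y \<le> 1" "\<forall>g\<in>#M. g + y \<le> 1 \<longrightarrow> g \<le> e"
    and "f \<le> e" and "N = add_mset (e + y) (M - {#e#})"
  using assms(1) by cases (use assms(2,3) in force)+

lemma bf_step_into_best_bin:
  assumes "fits L x j"
  obtains k where "fits L x k" and "\<forall>j. fits L x j \<longrightarrow> L ! j \<le> L ! k"
    and "bf_step L x = L[k := L ! k + x]"
proof -
  let ?best = "\<lambda>k. fits L x k \<and> (\<forall>j. fits L x j \<longrightarrow> L ! j \<le> L ! k)"
  let ?loads = "(\<lambda>j. L ! j) ` {j. fits L x j}"
  have "finite ?loads" unfolding fits_def by simp
  moreover have "?loads \<noteq> {}" using assms by blast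
  ultimately have "Max ?loads \<in> ?loads" by (rule Max_in)
  then obtain k where "fits L x k" "L ! k = Max ?loads" by auto
  with \<open>finite ?loads\<close> have "?best k" by simp
  then have "?best (LEAST k. ?best k)" by (rule LeastI)
  moreover have "bf_step L x = L[LEAST k. ?best k := L ! (LEAST k. ?best k) + x]"
    using assms unfolding bf_step_def by (auto simp: Let_def)
  ultimately show thesis using that by blast
qed

lemma bf_move_bf_step: "bf_move (mset L) x (mset (bf_step L x))"
proof (cases "\<exists>j. fits L x j")
  case True
  then obtain j where "fits L x j" by blast
  then obtain k where "fits L x k" and best: "\<forall>j. fits L x j \<longrightarrow> L ! j \<le> L ! k"
    and step: "bf_step L x = L[k := L ! k + x]"
    by (rule bf_step_into_best_bin)
  then have k: "k < length L" "L ! k + x \<le> 1" unfolding fits_def by auto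
  have "\<forall>f\<in>#mset L. f + x \<le> 1 \<longrightarrow> f \<le> L ! k"
    using best by (auto simp: in_set_conv_nth fits_def)
  with k have "bf_move (mset L) x (add_mset (L ! k + x) (mset L - {#L ! k#}))"
    by (intro bf_move.into_bin) auto
  with step k show ?thesis by (simp add: mset_update)
next
  case False
  then have "\<forall>f\<in>#mset L. 1 < f + x" by (auto simp: in_set_conv_nth fits_def not_le)
  then have "bf_move (mset L) x (add_mset x (mset L))" by (rule bf_move.new_bin)
  moreover have "bf_step L x = L @ [x]" using False unfolding bf_step_def by auto
  ultimately show ?thesis by simp
qed

text \<open>In both rules, \<open>D\<close> and \<open>D'\<close> are the closed bins and \<open>Z\<close> the shared open bins
  of the two runs.\<close>

inductive coupled :: "real multiset \<Rightarrow> real multiset \<Rightarrow> bool" where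
  single: "\<lbrakk>1/3 < a; a \<le> a'; size D = size D'; \<forall>d\<in>#D. 2/3 < d; \<forall>d\<in>#D'. 2/3 < d;
    no_two_fit Z; \<forall>z\<in>#Z. 1/3 < z \<and> 1 < z + a\<rbrakk>
    \<Longrightarrow> coupled (add_mset a (Z + D)) (add_mset a' (Z + D'))"
| pair: "\<lbrakk>1/3 < b; 1/3 < c; 1 < b + c; size D = Suc (size D'); \<forall>d\<in>#D. 2/3 < d; \<forall>d\<in>#D'. 2/3 < d;
    no_two_fit Z; \<forall>z\<in>#Z. 1/3 < z \<and> 1 < z + b \<and> 1 < z + c\<rbrakk>
    \<Longrightarrow> coupled (Z + D) (add_mset b (add_mset c (Z + D')))"

lemma coupled_size_le: "coupled M M' \<Longrightarrow> size M \<le> size M'"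
  by (induction rule: coupled.cases) auto

context
  fixes a a' y :: real and Z D D' :: "real multiset"
  assumes a: "1/3 < a" "a \<le> a'" and y: "1/3 < y" and size_D: "size D = size D'"
    and full_D: "\<forall>d\<in>#D. 2/3 < d" and full_D': "\<forall>d\<in>#D'. 2/3 < d"
    and Z: "no_two_fit Z" "\<forall>z\<in>#Z. 1/3 < z \<and> 1 < z + a"
begin

lemma coupled_single_new_bin:
  assumes no_fit: "\<forall>f\<in>#add_mset a (Z + D). 1 < f + y"
    and move': "bf_move (add_mset a' (Z + D')) y N'"
  shows "coupled (add_mset y (add_mset a (Z + D))) N'"
proof -
  have "\<forall>f\<in>#add_mset a' (Z + D'). 1 < f + y" using no_fit full_D' a y by force
  with move' have "N' = add_mset y (add_mset a' (Z + D'))" by (rule bf_move_no_fit)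
  moreover have "coupled (add_mset a (add_mset y Z + D)) (add_mset a' (add_mset y Z + D'))"
    using a y size_D full_D full_D' Z no_fit by (intro coupled.single) (auto simp: add.commute)
  ultimately show ?thesis by (simp add: add_mset_commute)
qed

lemma coupled_single_into_shared:
  assumes "e \<in># Z" and "e + y \<le> 1" and best: "\<forall>f\<in>#add_mset a (Z + D). f + y \<le> 1 \<longrightarrow> f \<le> e"
    and move': "bf_move (add_mset a' (Z + D')) y N'"
  shows "coupled (add_mset (e + y) (add_mset a (Z + D) - {#e#})) N'"
proof -
  obtain Z0 where Z0: "Z = add_mset e Z0" using \<open>e \<in># Z\<close> by (metis multi_member_split)
  have e: "1/3 < e" "\<forall>z\<in>#Z0. 1 < e + z" using Z Z0 by auto
  obtain e' where e': "e' \<in># add_mset a' (Z + D')" "e' + y \<le> 1" "e \<le> e'"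
    and N': "N' = add_mset (e' + y) (add_mset a' (Z + D') - {#e'#})"
    using move' by (rule bf_move_fitE) (use Z0 \<open>e + y \<le> 1\<close> in auto)
  have "e' \<in># Z \<or> e' = a'" using e' full_D' y by force
  then show ?thesis
  proof
    assume "e' \<in># Z"
    then have "e' = e" using best e' by fastforce
    moreover have "coupled (add_mset a (Z0 + add_mset (e + y) D)) (add_mset a' (Z0 + add_mset (e + y) D'))"
      using a y e size_D full_D full_D' Z Z0 by (intro coupled.single) auto
    ultimately show ?thesis using N' Z0 by (simp add: add_mset_commute)
  next
    assume "e' = a'"
    then have "a \<le> e" using best a e' by auto
    then have "coupled (add_mset a (Z0 + add_mset (e + y) D)) (add_mset e (Z0 + add_mset (a' + y) D'))"
      using a y e size_D full_D full_D' Z Z0 by (intro coupled.single) auto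
    then show ?thesis using N' Z0 \<open>e' = a'\<close> by (simp add: add_mset_commute)
  qed
qed

lemma coupled_single_into_differing:
  assumes "a + y \<le> 1" and best: "\<forall>f\<in>#add_mset a (Z + D). f + y \<le> 1 \<longrightarrow> f \<le> a"
    and move': "bf_move (add_mset a' (Z + D')) y N'"
  shows "coupled (add_mset (a + y) (Z + D)) N'"
  using move'
proof cases
  case (into_bin e')
  have "e' \<in># Z \<or> e' = a'" using into_bin full_D' y by force
  then show ?thesis
  proof
    assume "e' \<in># Z"
    then obtain Z0 where Z0: "Z = add_mset e' Z0" by (metis multi_member_split)
    have "e' \<le> a" using best into_bin Z0 by auto
    then have "coupled (add_mset e' (Z0 + add_mset (a + y) D)) (add_mset a' (Z0 + add_mset (e' + y) D'))"
      using a y size_D full_D full_D' Z Z0 by (intro coupled.single) (auto simp: add.commute)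
    then show ?thesis using into_bin Z0 by (simp add: add_mset_commute)
  next
    assume "e' = a'"
    have "coupled (add_mset (a + y) (Z + D)) (add_mset (a' + y) (Z + D'))"
      using a y size_D full_D full_D' Z by (intro coupled.single) auto
    then show ?thesis using into_bin \<open>e' = a'\<close> by simp
  qed
next
  case new_bin
  have "coupled (Z + add_mset (a + y) D) (add_mset a' (add_mset y (Z + D')))"
    using a y size_D full_D full_D' Z new_bin by (intro coupled.pair) auto
  then show ?thesis using new_bin by (simp add: add_mset_commute)
qed

lemma coupled_single_bf_move:
  assumes "bf_move (add_mset a (Z + D)) y N" and "bf_move (add_mset a' (Z + D')) y N'"
  shows "coupled N N'"
  using assms(1)
proof cases
  case (into_bin e)
  have "e \<in># Z \<or> e = a" using into_bin full_D y by force
  then show ?thesis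
    using into_bin assms(2) coupled_single_into_shared coupled_single_into_differing by auto
next
  case new_bin
  then show ?thesis using assms(2) coupled_single_new_bin by simp
qed

end

context
  fixes b c y :: real and Z D D' :: "real multiset"
  assumes bc: "1/3 < b" "1/3 < c" "1 < b + c" and y: "1/3 < y" and size_D: "size D = Suc (size D')"
    and full_D: "\<forall>d\<in>#D. 2/3 < d" and full_D': "\<forall>d\<in>#D'. 2/3 < d"
    and Z: "no_two_fit Z" "\<forall>z\<in>#Z. 1/3 < z \<and> 1 < z + b \<and> 1 < z + c"
begin

lemma pair_partnerE:
  assumes "e' = b \<or> e' = c"
  obtains p where "add_mset b (add_mset c X) = add_mset e' (add_mset p X)"
    and "1/3 < e'" and "1/3 < p" and "1 < e' + p" and "\<forall>z\<in>#Z. 1 < z + p"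
  using assms bc Z by (auto simp: add_mset_commute add.commute)

lemma coupled_pair_into_shared:
  assumes "e \<in># Z" and "e + y \<le> 1" and best: "\<forall>f\<in>#Z + D. f + y \<le> 1 \<longrightarrow> f \<le> e"
    and move': "bf_move (add_mset b (add_mset c (Z + D'))) y N'"
  shows "coupled (add_mset (e + y) (Z + D - {#e#})) N'"
proof -
  obtain Z0 where Z0: "Z = add_mset e Z0" using \<open>e \<in># Z\<close> by (metis multi_member_split)
  have e: "1/3 < e" "\<forall>z\<in>#Z0. 1 < e + z" using Z Z0 by auto
  obtain e' where e': "e' \<in># add_mset b (add_mset c (Z + D'))" "e' + y \<le> 1" "e \<le> e'"
    and N': "N' = add_mset (e' + y) (add_mset b (add_mset c (Z + D')) - {#e'#})"
    using move' by (rule bf_move_fitE) (use Z0 \<open>e + y \<le> 1\<close> in auto)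
  have "e' \<in># Z \<or> e' = b \<or> e' = c" using e' full_D' y by force
  then show ?thesis
  proof
    assume "e' \<in># Z"
    then have "e' = e" using best e' by fastforce
    moreover have "coupled (Z0 + add_mset (e + y) D) (add_mset b (add_mset c (Z0 + add_mset (e + y) D')))"
      using bc y e size_D full_D full_D' Z Z0 by (intro coupled.pair) auto
    ultimately show ?thesis using N' Z0 by (simp add: add_mset_commute)
  next
    assume "e' = b \<or> e' = c"
    then obtain p where p: "add_mset b (add_mset c (Z + D')) = add_mset e' (add_mset p (Z + D'))"
      "1/3 < e'" "1/3 < p" "1 < e' + p" "\<forall>z\<in>#Z. 1 < z + p"
      by (rule pair_partnerE)
    have "N' = add_mset (e' + y) (add_mset p (Z + D'))" using N' p(1) by simp
    moreover have "coupled (Z0 + add_mset (e + y) D) (add_mset e (add_mset p (Z0 + add_mset (e' + y) D')))"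
      using p y e size_D full_D full_D' Z Z0 by (intro coupled.pair) (auto simp: add.commute)
    ultimately show ?thesis using Z0 by (simp add: add_mset_commute)
  qed
qed

lemma coupled_pair_new_bin:
  assumes no_fit: "\<forall>f\<in>#Z + D. 1 < f + y"
    and move': "bf_move (add_mset b (add_mset c (Z + D'))) y N'"
  shows "coupled (add_mset y (Z + D)) N'"
  using move'
proof cases
  case (into_bin e')
  then have "e' = b \<or> e' = c" using no_fit full_D' y by force
  then obtain p where p: "add_mset b (add_mset c (Z + D')) = add_mset e' (add_mset p (Z + D'))"
    "1/3 < e'" "1/3 < p" "1 < e' + p" "\<forall>z\<in>#Z. 1 < z + p"
    by (rule pair_partnerE)
  have "coupled (add_mset y (Z + D)) (add_mset p (Z + add_mset (e' + y) D'))"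
    using p into_bin y size_D full_D full_D' Z no_fit by (intro coupled.single) (auto simp: add.commute)
  then show ?thesis using into_bin p(1) by (simp add: add_mset_commute)
next
  case new_bin
  have "coupled (add_mset y Z + D) (add_mset b (add_mset c (add_mset y Z + D')))"
    using bc y size_D full_D full_D' Z no_fit new_bin by (intro coupled.pair) (auto simp: add.commute)
  then show ?thesis using new_bin by (simp add: add_mset_commute)
qed

lemma coupled_pair_bf_move:
  assumes "bf_move (Z + D) y N" and "bf_move (add_mset b (add_mset c (Z + D'))) y N'"
  shows "coupled N N'"
  using assms(1)
proof cases
  case (into_bin e)
  have "e \<in># Z" using into_bin full_D y by force
  then show ?thesis using into_bin assms(2) coupled_pair_into_shared by simp
next
  case new_bin
  then show ?thesis using assms(2) coupled_pair_new_bin by simp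
qed

end

lemma coupled_bf_move:
  assumes "coupled M M'" and "bf_move M y N" and "bf_move M' y N'" and "1/3 < y"
  shows "coupled N N'"
  using assms(1)
proof cases
  case single
  then show ?thesis using assms(2-4) coupled_single_bf_move by blast
next
  case pair
  then show ?thesis using assms(2-4) coupled_pair_bf_move by blast
qed

lemma bf_move_no_two_fit:
  assumes "bf_move M y N" and "no_two_fit M" and "\<forall>e\<in>#M. 1/3 < e" and "1/3 < y"
  shows "no_two_fit N \<and> (\<forall>e\<in>#N. 1/3 < e)"
  using assms(1)
proof cases
  case (into_bin e)
  then obtain M0 where "M = add_mset e M0" by (metis multi_member_split)
  then show ?thesis using into_bin assms(2-4) by auto
next
  case new_bin
  then show ?thesis using assms(2-4) by (auto simp: add.commute)
qed

lemma coupled_bf_move_larger: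
  assumes M: "no_two_fit M" "\<forall>e\<in>#M. 1/3 < e" and x: "1/3 < x" "x < x'"
    and move: "bf_move M x N" and move': "bf_move M x' N'"
  shows "coupled N N'"
  using move'
proof cases
  case (into_bin e')
  obtain e where e: "e \<in># M" "e' \<le> e" and N: "N = add_mset (e + x) (M - {#e#})"
    using move by (rule bf_move_fitE) (use into_bin x in auto)
  obtain Z where Z: "M = add_mset e Z" using e by (metis multi_member_split)
  show ?thesis
  proof (cases "e' = e")
    case True
    have "coupled (add_mset (e + x) (Z + {#})) (add_mset (e + x') (Z + {#}))"
      using x M Z by (intro coupled.single) auto
    then show ?thesis using N into_bin Z True by simp
  next
    case False
    then have "e' \<in># Z" using into_bin Z by auto
    then obtain Z0 where Z0: "Z = add_mset e' Z0" by (metis multi_member_split)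
    have "coupled (add_mset e' (Z0 + {#e + x#})) (add_mset e (Z0 + {#e' + x'#}))"
      using x M Z Z0 e by (intro coupled.single) (auto simp: add.commute)
    then show ?thesis using N into_bin Z Z0 False by (simp add: add_mset_commute)
  qed
next
  case new_bin
  show ?thesis
    using move
  proof cases
    case (into_bin e)
    then obtain Z where Z: "M = add_mset e Z" by (metis multi_member_split)
    have "coupled (Z + {#e + x#}) (add_mset e (add_mset x' (Z + {#})))"
      using x M Z new_bin by (intro coupled.pair) (auto simp: add.commute)
    then show ?thesis using into_bin new_bin Z by (simp add: add_mset_commute)
  next
    case new_bin': new_bin
    have "coupled (add_mset x (M + {#})) (add_mset x' (M + {#}))"
      using x M new_bin' by (intro coupled.single) (auto simp: add.commute)
    then show ?thesis using new_bin new_bin' by simp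
  qed
qed

lemma no_two_fit_foldl_bf_step:
  assumes "no_two_fit (mset L)" and "\<forall>e\<in>set L. 1/3 < e" and "\<forall>y\<in>set S. 1/3 < y"
  shows "no_two_fit (mset (foldl bf_step L S)) \<and> (\<forall>e\<in>set (foldl bf_step L S). 1/3 < e)"
  using assms
proof (induction S arbitrary: L)
  case (Cons y S)
  have "no_two_fit (mset (bf_step L y)) \<and> (\<forall>e\<in>#mset (bf_step L y). 1/3 < e)"
    using Cons.prems by (intro bf_move_no_two_fit[OF bf_move_bf_step]) auto
  then show ?case using Cons.IH[of "bf_step L y"] Cons.prems(3) by simp
qed simp

lemma coupled_foldl_bf_step:
  assumes "coupled (mset L) (mset L')" and "\<forall>y\<in>set S. 1/3 < y"
  shows "coupled (mset (foldl bf_step L S)) (mset (foldl bf_step L' S))"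
  using assms
proof (induction S arbitrary: L L')
  case (Cons y S)
  then have "coupled (mset (bf_step L y)) (mset (bf_step L' y))"
    by (intro coupled_bf_move[OF _ bf_move_bf_step bf_move_bf_step]) auto
  with Cons show ?case by simp
qed simp

theorem lemma17:
  fixes I I' :: "real list" and i :: nat
  assumes "length I' = length I"
    and "\<forall>x \<in> set I. 1/3 < x \<and> x \<le> 1"
    and "\<forall>x \<in> set I'. 0 < x \<and> x \<le> 1"
    and "i < length I"
    and "I' ! i > I ! i"
    and "\<forall>j < length I. j \<noteq> i \<longrightarrow> I' ! j = I ! j"
  shows "BF I \<le> BF I'"
proof -
  define P S where "P = take i I" and "S = drop (Suc i) I"
  have "I' = I[i := I' ! i]"
    using assms(1,4,6) by (intro nth_equalityI) (auto simp: nth_list_update)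
  then have I: "I = P @ I ! i # S" and I': "I' = P @ I' ! i # S"
    unfolding P_def S_def using assms(4) by (simp_all add: id_take_nth_drop upd_conv_take_nth_drop)
  have large: "\<forall>y\<in>set (P @ I ! i # S). 1/3 < y" using assms(2) I by simp
  then have "no_two_fit (mset (bf_pack P)) \<and> (\<forall>e\<in>set (bf_pack P). 1/3 < e)"
    unfolding bf_pack_def by (intro no_two_fit_foldl_bf_step) auto
  then have "coupled (mset (bf_step (bf_pack P) (I ! i))) (mset (bf_step (bf_pack P) (I' ! i)))"
    using large assms(5) by (intro coupled_bf_move_larger[OF _ _ _ _ bf_move_bf_step bf_move_bf_step]) auto
  then have "coupled (mset (bf_pack I)) (mset (bf_pack I'))"
    using large coupled_foldl_bf_step unfolding bf_pack_def by (subst I, subst I') simp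
  then show ?thesis unfolding BF_def by (metis coupled_size_le size_mset)
qed

end
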